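(* Let $\mathcal I,\mathcal J,\mathcal K$ be ideals on $\omega$ and let $X$ be a discrete topological space. (1) For every sequence $(f_n)$ in $\mathcal C(X)$, $\mathcal I$-pointwise convergence to $0$ implies $\mathcal J$-quasi-normal convergence to $0$ if and only if $|X|<\mathfrak b_s(\mathcal J,\mathcal J,\mathcal I)$. (2) For every sequence $(f_n)$ in $\mathcal C(X)$, $\mathcal I$-pointwise convergence to $0$ implies $\mathcal K$-$\sigma$-uniform convergence to $0$ if and only if $|X|<\mathfrak b_\sigma(\mathcal I,\mathcal K)$. (3) For every sequence $(f_n)$ in $\mathcal C(X)$, $\mathcal J$-quasi-normal convergence to $0$ implies $\mathcal K$-$\sigma$-uniform convergence to $0$ if and only if $|X|<\mathrm{add}_\omega(\mathcal J,\mathcal K)$.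
   Context: An ideal on $\omega$ is a family $\mathcal I\subseteq\mathcal P(\omega)$ closed under finite unions and subsets, containing all finite sets, with $\omega\notin\mathcal I$. A real sequence $(a_n)$ is $\mathcal I$-convergent to $0$ if $\{n:|a_n|\ge\varepsilon\}\in\mathcal I$ for all $\varepsilon>0$. For a sequence $(f_n)$ of real functions on a set $X$: $\mathcal I$-pointwise convergence to $0$ means $(f_n(x))$ is $\mathcal I$-convergent to $0$ for each $x$; $\mathcal I$-uniform means $\{n:\exists x\in X\,(|f_n(x)|\ge\varepsilon)\}\in\mathcal I$ for each $\varepsilon>0$; $\mathcal I$-$\sigma$-uniform means $X=\bigcup_{k\in\omega}X_k$ with $(f_n\restriction X_k)$ $\mathcal I$-uniformly convergent to $0$ for each $k$; $\mathcal I$-quasi-normal means there is a sequence $(\varepsilon_n)$ of positive reals $\mathcal I$-convergent to $0$ with $\{n:|f_n(x)|\ge\varepsilon_n\}\in\mathcal I$ for each $x$. $\mathcal C(X)$ = continuous real functions on $X$. Cardinals (convention $\min\emptyset=\infty$, $\kappa<\infty$ for all cardinals): $\widehat{\mathcal P}_{\mathcal I}$ = sequences $(A_n)\in\mathcal I^\omega$ of pairwise disjoint sets; $\mathcal P_{\mathcal I}$ = those with $\bigcup_nA_n=\omega$; $\mathcal M_{\mathcal I}$ = sequences $(E_k)\in\mathcal I^\omega$ with $E_k\subseteq E_{k+1}$. $\mathfrak b_s(\mathcal I,\mathcal J,\mathcal K)=\min\{|\mathcal E|:\mathcal E\subseteq\widehat{\mathcal P}_{\mathcal K}$ and for every $(A_n)\in\mathcal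 P_{\mathcal J}$ there is $(E_n)\in\mathcal E$ with $\bigcup_n(A_{n+1}\cap\bigcup_{i\le n}E_i)\notin\mathcal I\}$; $\mathfrak b_\sigma(\mathcal I,\mathcal J)=\min\{|\mathcal E|:\mathcal E\subseteq\mathcal M_{\mathcal I}$ and for every $(A_n)\in\mathcal M_{\mathcal J}$ there is $(E_n)\in\mathcal E$ with $E_n\not\subseteq A_n$ for infinitely many $n\}$; $\mathrm{add}_\omega(\mathcal I,\mathcal J)=\min\{|\mathcal A|:\mathcal A\subseteq\mathcal I$ and for every $(B_n)\in\mathcal J^\omega$ there is $A\in\mathcal A$ with $A\not\subseteq B_n$ for all $n\}$. *)

theory Defs
  imports "HOL-Analysis.Analysis" "HOL-Library.Equipollence"
begin

definition is_ideal :: "nat set set \<Rightarrow> bool" where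
  "is_ideal I \<longleftrightarrow>
     (\<forall>A\<in>I. \<forall>B\<in>I. A \<union> B \<in> I) \<and>
     (\<forall>A\<in>I. \<forall>B. B \<subseteq> A \<longrightarrow> B \<in> I) \<and>
     (\<forall>A. finite A \<longrightarrow> A \<in> I) \<and>
     UNIV \<notin> I"

definition I_conv :: "nat set set \<Rightarrow> (nat \<Rightarrow> real) \<Rightarrow> bool" where
  "I_conv I a \<longleftrightarrow> (\<forall>\<epsilon>>0. {n. \<bar>a n\<bar> \<ge> \<epsilon>} \<in> I)"

definition I_pointwise :: "nat set set \<Rightarrow> 'a set \<Rightarrow> (nat \<Rightarrow> 'a \<Rightarrow> real) \<Rightarrow> bool" where
  "I_pointwise I X f \<longleftrightarrow> (\<forall>x\<in>X. I_conv I (\<lambda>n. f n x))"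

definition I_uniform :: "nat set set \<Rightarrow> 'a set \<Rightarrow> (nat \<Rightarrow> 'a \<Rightarrow> real) \<Rightarrow> bool" where
  "I_uniform I X f \<longleftrightarrow> (\<forall>\<epsilon>>0. {n. \<exists>x\<in>X. \<bar>f n x\<bar> \<ge> \<epsilon>} \<in> I)"

definition I_sigma_uniform :: "nat set set \<Rightarrow> 'a set \<Rightarrow> (nat \<Rightarrow> 'a \<Rightarrow> real) \<Rightarrow> bool" where
  "I_sigma_uniform I X f \<longleftrightarrow>
     (\<exists>Xk :: nat \<Rightarrow> 'a set. X = (\<Union>k. Xk k) \<and> (\<forall>k. I_uniform I (Xk k) f))"

definition I_quasi_normal :: "nat set set \<Rightarrow> 'a set \<Rightarrow> (nat \<Rightarrow> 'a \<Rightarrow> real) \<Rightarrow> bool" where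
  "I_quasi_normal I X f \<longleftrightarrow>
     (\<exists>eps :: nat \<Rightarrow> real. (\<forall>n. eps n > 0) \<and> I_conv I eps \<and>
        (\<forall>x\<in>X. {n. \<bar>f n x\<bar> \<ge> eps n} \<in> I))"

definition hatP :: "nat set set \<Rightarrow> (nat \<Rightarrow> nat set) set" where
  "hatP I = {A. (\<forall>n. A n \<in> I) \<and> (\<forall>n m. n \<noteq> m \<longrightarrow> A n \<inter> A m = {})}"

definition PP :: "nat set set \<Rightarrow> (nat \<Rightarrow> nat set) set" where
  "PP I = {A \<in> hatP I. (\<Union>n. A n) = UNIV}"

definition MM :: "nat set set \<Rightarrow> (nat \<Rightarrow> nat set) set" where
  "MM I = {E. (\<forall>n. E n \<in> I) \<and> (\<forall>k. E k \<subseteq> E (Suc k))}"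

text \<open>Witness families whose minimal cardinality defines the cardinal invariants.\<close>
definition bs_family :: "nat set set \<Rightarrow> nat set set \<Rightarrow> nat set set \<Rightarrow> (nat \<Rightarrow> nat set) set \<Rightarrow> bool" where
  "bs_family I J K \<E> \<longleftrightarrow> \<E> \<subseteq> hatP K \<and>
     (\<forall>A\<in>PP J. \<exists>E\<in>\<E>. (\<Union>n. A (Suc n) \<inter> (\<Union>i\<le>n. E i)) \<notin> I)"

definition bsigma_family :: "nat set set \<Rightarrow> nat set set \<Rightarrow> (nat \<Rightarrow> nat set) set \<Rightarrow> bool" where
  "bsigma_family I J \<E> \<longleftrightarrow> \<E> \<subseteq> MM I \<and>
     (\<forall>A\<in>MM J. \<exists>E\<in>\<E>. infinite {n. \<not> E n \<subseteq> A n})"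

definition addw_family :: "nat set set \<Rightarrow> nat set set \<Rightarrow> nat set set \<Rightarrow> bool" where
  "addw_family I J \<A> \<longleftrightarrow> \<A> \<subseteq> I \<and>
     (\<forall>B :: nat \<Rightarrow> nat set. (\<forall>n. B n \<in> J) \<longrightarrow> (\<exists>A\<in>\<A>. \<forall>n. \<not> A \<subseteq> B n))"

text \<open>|X| < min{|E| : Fam E} (with min of the empty set = infinity):
  no witness family has cardinality \<le> |X|.\<close>
definition card_below :: "'a set \<Rightarrow> ('b set \<Rightarrow> bool) \<Rightarrow> bool" where
  "card_below X Fam \<longleftrightarrow> (\<forall>E. Fam E \<longrightarrow> \<not> (E \<lesssim> X))"

end

theory Submission
  imports Defs
begin

(* Everything is read off the superlevel sets S_k(a) = {n. |a n| >= 1/(k+1)}: a sequence is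
   I-convergent iff all S_k(a) lie in I, and I-uniformly convergent on Y iff, for every k, the
   union of the S_k(f(-,x)) over x in Y does. Conversely any sequence of sets H_i is realised
   as S_k = H_0 u ... u H_k by the function n |-> 1/(1 + least i with n in H_i), and a single
   set by its indicator.
   In this dictionary the threshold sequence of quasi-normal convergence amounts to a partition
   of omega into J-sets (the threshold is about 1/j on the j-th block), and the decomposition of
   sigma-uniform convergence amounts to one increasing sequence of K-sets that eventually
   contains the superlevel sets at every point. Each of the three implications thereby becomes
   the combinatorial property of the X-indexed families {h x : x in X} whose failure defines
   the corresponding cardinal, and |X| < min {|E| : ...} says exactly that no X-indexed family
   is a witness. Continuity is vacuous on a discrete space. *)

lemma ideal_mono: "is_ideal I \<Longrightarrow> A \<in> I \<Longrightarrow> B \<subseteq> A \<Longrightarrow> B \<in> I"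
  unfolding is_ideal_def by blast

lemma ideal_Un: "is_ideal I \<Longrightarrow> A \<in> I \<Longrightarrow> B \<in> I \<Longrightarrow> A \<union> B \<in> I"
  unfolding is_ideal_def by blast

lemma ideal_finite: "is_ideal I \<Longrightarrow> finite A \<Longrightarrow> A \<in> I"
  unfolding is_ideal_def by blast

lemma ideal_UN_atMost:
  fixes n :: nat
  assumes "is_ideal I" and "\<And>i. i \<le> n \<Longrightarrow> A i \<in> I"
  shows "(\<Union>i\<le>n. A i) \<in> I"
  using assms(2) by (induction n) (auto simp: atMost_Suc ideal_Un[OF assms(1)])

lemma one_over_Suc_le_iff: "1 / real (Suc k) \<le> 1 / real (Suc l) \<longleftrightarrow> l \<le> k"
  by (simp add: field_simps)

lemma ideal_threshold_iff_one_over_Suc: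
  assumes "is_ideal I" and antimono: "\<And>\<epsilon> \<delta>. \<epsilon> \<le> \<delta> \<Longrightarrow> S \<delta> \<subseteq> S \<epsilon>"
  shows "(\<forall>\<epsilon>>0. S \<epsilon> \<in> I) \<longleftrightarrow> (\<forall>k. S (1 / real (Suc k)) \<in> I)"
proof
  assume "\<forall>k. S (1 / real (Suc k)) \<in> I"
  moreover have "\<exists>k. S \<epsilon> \<subseteq> S (1 / real (Suc k))" if "\<epsilon> > 0" for \<epsilon>
    using reals_Archimedean[OF that] antimono by (metis inverse_eq_divide less_imp_le)
  ultimately show "\<forall>\<epsilon>>0. S \<epsilon> \<in> I" using ideal_mono[OF assms(1)] by blast
qed simp

definition superlevel_set :: "(nat \<Rightarrow> real) \<Rightarrow> nat \<Rightarrow> nat set" where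
  "superlevel_set a k = {n. 1 / real (Suc k) \<le> \<bar>a n\<bar>}"

lemma incseq_superlevel_set: "incseq (superlevel_set a)"
proof (rule monoI, rule subsetI)
  fix k l n assume "k \<le> l" and "n \<in> superlevel_set a k"
  then show "n \<in> superlevel_set a l"
    unfolding superlevel_set_def using one_over_Suc_le_iff[of l k] by simp
qed

lemma I_conv_iff_superlevel_sets:
  assumes "is_ideal I"
  shows "I_conv I a \<longleftrightarrow> (\<forall>k. superlevel_set a k \<in> I)"
  unfolding I_conv_def superlevel_set_def
  by (rule ideal_threshold_iff_one_over_Suc[OF assms]) auto

lemma I_uniform_iff_superlevel_sets:
  assumes "is_ideal I"
  shows "I_uniform I Y f \<longleftrightarrow> (\<forall>k. (\<Union>x\<in>Y. superlevel_set (\<lambda>n. f n x) k) \<in> I)"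
proof -
  have "(\<Union>x\<in>Y. superlevel_set (\<lambda>n. f n x) k) = {n. \<exists>x\<in>Y. 1 / real (Suc k) \<le> \<bar>f n x\<bar>}" for k
    by (auto simp: superlevel_set_def)
  then show ?thesis
    unfolding I_uniform_def
    by (simp only:) (rule ideal_threshold_iff_one_over_Suc[OF assms], blast intro: order_trans)
qed

definition first_hit_seq :: "(nat \<Rightarrow> nat set) \<Rightarrow> nat \<Rightarrow> real" where
  "first_hit_seq H n = (if \<exists>i. n \<in> H i then 1 / real (Suc (LEAST i. n \<in> H i)) else 0)"

lemma superlevel_set_first_hit_seq: "superlevel_set (first_hit_seq H) k = (\<Union>i\<le>k. H i)"
proof (intro set_eqI iffI)
  fix n assume "n \<in> superlevel_set (first_hit_seq H) k"
  then have hit: "\<exists>i. n \<in> H i" and "1 / real (Suc k) \<le> 1 / real (Suc (LEAST i. n \<in> H i))"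
    by (auto simp: superlevel_set_def first_hit_seq_def split: if_splits)
  then have "(LEAST i. n \<in> H i) \<le> k" by (simp only: one_over_Suc_le_iff)
  with LeastI_ex[OF hit] show "n \<in> (\<Union>i\<le>k. H i)" by blast
next
  fix n assume "n \<in> (\<Union>i\<le>k. H i)"
  then obtain i where "i \<le> k" and "n \<in> H i" by blast
  then have "(LEAST i. n \<in> H i) \<le> k" using Least_le[of "\<lambda>i. n \<in> H i"] by fastforce
  then have "1 / real (Suc k) \<le> 1 / real (Suc (LEAST i. n \<in> H i))"
    by (simp only: one_over_Suc_le_iff)
  then show "n \<in> superlevel_set (first_hit_seq H) k"
    using \<open>n \<in> H i\<close> by (auto simp: superlevel_set_def first_hit_seq_def)
qed

lemma I_pointwise_first_hit_seq:
  assumes "is_ideal I" and "\<And>x i. x \<in> X \<Longrightarrow> h x i \<in> I"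
  shows "I_pointwise I X (\<lambda>n x. first_hit_seq (h x) n)"
  using assms
  by (simp add: I_pointwise_def I_conv_iff_superlevel_sets superlevel_set_first_hit_seq
      ideal_UN_atMost)

lemma superlevel_set_indicator: "superlevel_set (indicator H) k = H"
  by (auto simp: superlevel_set_def indicator_def)

lemma disjointed_in_hatP:
  assumes "is_ideal I" and "\<And>k. A k \<in> I"
  shows "disjointed A \<in> hatP I"
proof -
  have "disjointed A k \<in> I" for k
    using ideal_mono[OF assms(1) assms(2) disjointed_subset] .
  then show ?thesis
    using disjoint_family_disjointed[of A] by (auto simp: hatP_def disjoint_family_on_def)
qed

lemma UN_atMost_disjointed: "incseq A \<Longrightarrow> (\<Union>i\<le>n. disjointed A i) = A n"
  using finite_UN_disjointed_eq[of A "Suc n"] mono_imp_UN_eq_last[of A n]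
  by (simp add: atLeast0LessThan lessThan_Suc_atMost)

lemma singletons_in_PP: "is_ideal J \<Longrightarrow> (\<lambda>n. {n}) \<in> PP J"
  by (auto simp: PP_def hatP_def ideal_finite)

lemma partition_below_threshold:
  assumes J: "is_ideal J" and pos: "\<And>m. eps m > 0" and conv: "I_conv J eps"
  obtains A where "A \<in> PP J" and "\<And>n m. m \<in> A (Suc n) \<Longrightarrow> eps m \<le> 1 / real (Suc n)"
proof -
  define A where "A j = {m. nat \<lfloor>1 / eps m\<rfloor> = j}" for j
  have bounds: "real j \<le> 1 / eps m \<and> 1 / eps m < real (Suc j)" if "m \<in> A j" for m j
  proof -
    have "nat \<lfloor>1 / eps m\<rfloor> = j" and "0 \<le> \<lfloor>1 / eps m\<rfloor>"
      using that pos[of m] by (simp_all add: A_def)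
    then have "\<lfloor>1 / eps m\<rfloor> = int j" by linarith
    then show ?thesis by (simp add: floor_eq_iff)
  qed
  have below: "A j \<subseteq> superlevel_set eps j" for j
  proof
    fix m assume "m \<in> A j"
    then show "m \<in> superlevel_set eps j"
      using bounds[of m j] pos[of m] by (simp add: superlevel_set_def field_simps)
  qed
  moreover have "superlevel_set eps j \<in> J" for j
    using conv by (simp add: I_conv_iff_superlevel_sets[OF J])
  ultimately have "A j \<in> J" for j
    using ideal_mono[OF J] by blast
  then have "A \<in> PP J"
    by (auto simp: PP_def hatP_def A_def)
  moreover have "eps m \<le> 1 / real (Suc n)" if "m \<in> A (Suc n)" for n m
    using bounds[OF that] pos[of m] by (simp add: field_simps)
  ultimately show thesis using that by blast
qed

lemma threshold_of_partition:
  assumes J: "is_ideal J" and A: "A \<in> PP J"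
  obtains eps where "\<And>m. eps m > 0" and "I_conv J eps"
    and "\<And>n m. m \<in> A (Suc n) \<Longrightarrow> eps m = 1 / real (Suc n)"
proof -
  have AJ: "A j \<in> J" and disj: "\<And>i j. i \<noteq> j \<Longrightarrow> A i \<inter> A j = {}"
    and cover: "(\<Union>j. A j) = UNIV" for j
    using A by (auto simp: PP_def hatP_def)
  define idx where "idx m = (LEAST j. m \<in> A j)" for m
  have idx: "idx m = j" if "m \<in> A j" for m j
    unfolding idx_def using that disj by (metis Least_equality disjoint_iff order_refl)
  \<comment> \<open>Both blocks \<open>A 0\<close> and \<open>A 1\<close> get the threshold \<open>1\<close>, via truncated subtraction.\<close>
  define eps where "eps m = 1 / real (Suc (idx m - 1))" for m
  have "superlevel_set eps k \<subseteq> (\<Union>j\<le>Suc k. A j)" for k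
  proof
    fix m assume "m \<in> superlevel_set eps k"
    then have "idx m - 1 \<le> k" by (simp add: superlevel_set_def eps_def field_simps)
    moreover obtain j where "m \<in> A j" using cover by blast
    ultimately show "m \<in> (\<Union>j\<le>Suc k. A j)" using idx by fastforce
  qed
  moreover have "(\<Union>j\<le>Suc k. A j) \<in> J" for k
    by (rule ideal_UN_atMost[OF J AJ])
  ultimately have "I_conv J eps"
    using ideal_mono[OF J] by (meson I_conv_iff_superlevel_sets[OF J])
  moreover have "eps m = 1 / real (Suc n)" if "m \<in> A (Suc n)" for n m
    by (simp add: eps_def idx[OF that])
  ultimately show thesis using that[of eps] by (simp add: eps_def)
qed

lemma I_quasi_normal_iff_partition:
  assumes J: "is_ideal J"
  shows "I_quasi_normal J X f \<longleftrightarrow>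
    (\<exists>A\<in>PP J. \<forall>x\<in>X. (\<Union>n. A (Suc n) \<inter> superlevel_set (\<lambda>m. f m x) n) \<in> J)"
proof
  assume "I_quasi_normal J X f"
  then obtain eps where pos: "\<And>m. eps m > 0" and conv: "I_conv J eps"
    and small: "\<And>x. x \<in> X \<Longrightarrow> {m. eps m \<le> \<bar>f m x\<bar>} \<in> J"
    unfolding I_quasi_normal_def by blast
  obtain A where A: "A \<in> PP J" and below: "\<And>n m. m \<in> A (Suc n) \<Longrightarrow> eps m \<le> 1 / real (Suc n)"
    using partition_below_threshold[OF J pos conv] by blast
  have "(\<Union>n. A (Suc n) \<inter> superlevel_set (\<lambda>m. f m x) n) \<subseteq> {m. eps m \<le> \<bar>f m x\<bar>}" for x
    using below by (force simp: superlevel_set_def)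
  with A small ideal_mono[OF J]
  show "\<exists>A\<in>PP J. \<forall>x\<in>X. (\<Union>n. A (Suc n) \<inter> superlevel_set (\<lambda>m. f m x) n) \<in> J"
    by blast
next
  assume "\<exists>A\<in>PP J. \<forall>x\<in>X. (\<Union>n. A (Suc n) \<inter> superlevel_set (\<lambda>m. f m x) n) \<in> J"
  then obtain A where A: "A \<in> PP J"
    and tails: "\<And>x. x \<in> X \<Longrightarrow> (\<Union>n. A (Suc n) \<inter> superlevel_set (\<lambda>m. f m x) n) \<in> J"
    by blast
  obtain eps where pos: "\<And>m. eps m > 0" and conv: "I_conv J eps"
    and eq: "\<And>n m. m \<in> A (Suc n) \<Longrightarrow> eps m = 1 / real (Suc n)"
    using threshold_of_partition[OF J A] by blast
  have "A 0 \<in> J" and cover: "(\<Union>j. A j) = UNIV"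
    using A by (auto simp: PP_def hatP_def)
  have "{m. eps m \<le> \<bar>f m x\<bar>} \<subseteq> A 0 \<union> (\<Union>n. A (Suc n) \<inter> superlevel_set (\<lambda>m. f m x) n)" for x
  proof
    fix m assume "m \<in> {m. eps m \<le> \<bar>f m x\<bar>}"
    moreover obtain j where "m \<in> A j" using cover by blast
    ultimately show "m \<in> A 0 \<union> (\<Union>n. A (Suc n) \<inter> superlevel_set (\<lambda>m. f m x) n)"
      using eq by (cases j) (auto simp: superlevel_set_def)
  qed
  then have "{m. eps m \<le> \<bar>f m x\<bar>} \<in> J" if "x \<in> X" for x
    using ideal_mono[OF J ideal_Un[OF J \<open>A 0 \<in> J\<close> tails[OF that]]] by blast
  with pos conv show "I_quasi_normal J X f"
    unfolding I_quasi_normal_def by blast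
qed

lemma I_sigma_uniform_iff_MM:
  assumes K: "is_ideal K"
  shows "I_sigma_uniform K X f \<longleftrightarrow>
    (\<exists>A\<in>MM K. \<forall>x\<in>X. finite {k. \<not> superlevel_set (\<lambda>n. f n x) k \<subseteq> A k})"
proof
  assume "I_sigma_uniform K X f"
  then obtain Y :: "nat \<Rightarrow> 'a set"
    where XY: "X = (\<Union>j. Y j)" and unif: "\<And>j. I_uniform K (Y j) f"
    unfolding I_sigma_uniform_def by blast
  define A where "A k = (\<Union>j\<le>k. \<Union>x\<in>Y j. superlevel_set (\<lambda>n. f n x) k)" for k
  have "A \<in> MM K"
    unfolding MM_def
  proof (intro CollectI conjI allI)
    show "A k \<in> K" for k
      unfolding A_def using unif
      by (intro ideal_UN_atMost[OF K]) (simp add: I_uniform_iff_superlevel_sets[OF K])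
    show "A k \<subseteq> A (Suc k)" for k
      unfolding A_def using incseq_superlevel_set by (fastforce simp: incseq_Suc_iff)
  qed
  moreover have "finite {k. \<not> superlevel_set (\<lambda>n. f n x) k \<subseteq> A k}" if "x \<in> Y j" for x j
  proof (rule finite_subset)
    show "{k. \<not> superlevel_set (\<lambda>n. f n x) k \<subseteq> A k} \<subseteq> {..<j}"
      using that by (fastforce simp: A_def not_less)
  qed simp
  ultimately show "\<exists>A\<in>MM K. \<forall>x\<in>X. finite {k. \<not> superlevel_set (\<lambda>n. f n x) k \<subseteq> A k}"
    using XY by blast
next
  assume "\<exists>A\<in>MM K. \<forall>x\<in>X. finite {k. \<not> superlevel_set (\<lambda>n. f n x) k \<subseteq> A k}"
  then obtain A where A: "A \<in> MM K"
    and fin: "\<And>x. x \<in> X \<Longrightarrow> finite {k. \<not> superlevel_set (\<lambda>n. f n x) k \<subseteq> A k}"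
    by blast
  have AK: "A k \<in> K" and "incseq A" for k
    using A by (auto simp: MM_def incseq_Suc_iff)
  define Y :: "nat \<Rightarrow> 'a set"
    where "Y j = {x \<in> X. \<forall>k\<ge>j. superlevel_set (\<lambda>n. f n x) k \<subseteq> A k}" for j
  have "X \<subseteq> (\<Union>j. Y j)"
  proof
    fix x assume "x \<in> X"
    then obtain j where bound: "{k. \<not> superlevel_set (\<lambda>n. f n x) k \<subseteq> A k} \<subseteq> {..<j}"
      using fin finite_nat_bounded by blast
    have "superlevel_set (\<lambda>n. f n x) k \<subseteq> A k" if "j \<le> k" for k
      using bound that by (metis lessThan_iff mem_Collect_eq not_le subsetD)
    with \<open>x \<in> X\<close> show "x \<in> (\<Union>j. Y j)" by (intro UN_I[of j]) (auto simp: Y_def)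
  qed
  then have "X = (\<Union>j. Y j)" by (auto simp: Y_def)
  moreover have "I_uniform K (Y j) f" for j
  proof -
    have "(\<Union>x\<in>Y j. superlevel_set (\<lambda>n. f n x) k) \<subseteq> A (max j k)" for k
    proof (rule UN_least)
      fix x assume "x \<in> Y j"
      then have "superlevel_set (\<lambda>n. f n x) (max j k) \<subseteq> A (max j k)" by (simp add: Y_def)
      moreover have "superlevel_set (\<lambda>n. f n x) k \<subseteq> superlevel_set (\<lambda>n. f n x) (max j k)"
        by (rule monoD[OF incseq_superlevel_set]) simp
      ultimately show "superlevel_set (\<lambda>n. f n x) k \<subseteq> A (max j k)" by blast
    qed
    then show ?thesis
      unfolding I_uniform_iff_superlevel_sets[OF K] using AK ideal_mono[OF K] by blast
  qed
  ultimately show "I_sigma_uniform K X f"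
    unfolding I_sigma_uniform_def by blast
qed

lemma I_sigma_uniform_if_dominated:
  fixes B :: "nat \<Rightarrow> nat set" and X :: "'a set"
  assumes K: "is_ideal K" and conv: "I_conv K eps" and BK: "\<And>j. B j \<in> K"
    and dominated: "\<And>x. x \<in> X \<Longrightarrow> \<exists>j. {m. eps m \<le> \<bar>f m x\<bar>} \<subseteq> B j"
  shows "I_sigma_uniform K X f"
proof -
  define Y :: "nat \<Rightarrow> 'a set" where "Y j = {x \<in> X. {m. eps m \<le> \<bar>f m x\<bar>} \<subseteq> B j}" for j
  have "X = (\<Union>j. Y j)" using dominated by (auto simp: Y_def)
  moreover have "I_uniform K (Y j) f" for j
    unfolding I_uniform_iff_superlevel_sets[OF K]
  proof
    fix k
    have "(\<Union>x\<in>Y j. superlevel_set (\<lambda>m. f m x) k) \<subseteq> B j \<union> superlevel_set eps k"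
      by (force simp: Y_def superlevel_set_def)
    moreover have "superlevel_set eps k \<in> K" using conv by (simp add: I_conv_iff_superlevel_sets[OF K])
    ultimately show "(\<Union>x\<in>Y j. superlevel_set (\<lambda>m. f m x) k) \<in> K"
      using ideal_mono[OF K ideal_Un[OF K BK]] by blast
  qed
  ultimately show ?thesis unfolding I_sigma_uniform_def by blast
qed

lemma card_below_iff_no_indexed_family:
  assumes "d \<in> S" and sub: "\<And>E. Fam E \<Longrightarrow> E \<subseteq> S"
    and upward: "\<And>E E'. Fam E \<Longrightarrow> E \<subseteq> E' \<Longrightarrow> E' \<subseteq> S \<Longrightarrow> Fam E'"
  shows "card_below X Fam \<longleftrightarrow> (\<forall>h. h ` X \<subseteq> S \<longrightarrow> \<not> Fam (h ` X))"
proof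
  assume "card_below X Fam"
  then show "\<forall>h. h ` X \<subseteq> S \<longrightarrow> \<not> Fam (h ` X)"
    by (auto simp: card_below_def image_lepoll)
next
  assume no_family: "\<forall>h. h ` X \<subseteq> S \<longrightarrow> \<not> Fam (h ` X)"
  show "card_below X Fam"
    unfolding card_below_def
  proof (intro allI impI notI)
    fix E assume "Fam E" and "E \<lesssim> X"
    then obtain g where g: "E \<subseteq> g ` X" by (auto simp: lepoll_iff)
    define h where "h x = (if g x \<in> S then g x else d)" for x
    have "h ` X \<subseteq> S" using \<open>d \<in> S\<close> by (auto simp: h_def)
    moreover have "E \<subseteq> h ` X"
      using g sub[OF \<open>Fam E\<close>] by (force simp: h_def)
    ultimately show False
      using no_family upward[OF \<open>Fam E\<close>] by blast
  qed
qed

lemma card_below_bs_family_iff: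
  assumes "is_ideal K"
  shows "card_below X (bs_family I J K) \<longleftrightarrow>
    (\<forall>h. (\<forall>x\<in>X. h x \<in> hatP K) \<longrightarrow> (\<exists>A\<in>PP J. \<forall>x\<in>X. (\<Union>n. A (Suc n) \<inter> (\<Union>i\<le>n. h x i)) \<in> I))"
proof -
  have "(\<lambda>_. {}) \<in> hatP K" using assms by (simp add: hatP_def ideal_finite)
  then have "card_below X (bs_family I J K) \<longleftrightarrow>
      (\<forall>h. h ` X \<subseteq> hatP K \<longrightarrow> \<not> bs_family I J K (h ` X))"
    by (rule card_below_iff_no_indexed_family) (unfold bs_family_def, blast+)
  then show ?thesis
    by (simp add: bs_family_def image_subset_iff)
qed

lemma card_below_bsigma_family_iff:
  assumes "is_ideal I"
  shows "card_below X (bsigma_family I K) \<longleftrightarrow>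
    (\<forall>h. (\<forall>x\<in>X. h x \<in> MM I) \<longrightarrow> (\<exists>A\<in>MM K. \<forall>x\<in>X. finite {n. \<not> h x n \<subseteq> A n}))"
proof -
  have "(\<lambda>_. {}) \<in> MM I" using assms by (simp add: MM_def ideal_finite)
  then have "card_below X (bsigma_family I K) \<longleftrightarrow>
      (\<forall>h. h ` X \<subseteq> MM I \<longrightarrow> \<not> bsigma_family I K (h ` X))"
    by (rule card_below_iff_no_indexed_family) (unfold bsigma_family_def, blast+)
  then show ?thesis
    by (simp add: bsigma_family_def image_subset_iff)
qed

lemma card_below_addw_family_iff:
  assumes "is_ideal J"
  shows "card_below X (addw_family J K) \<longleftrightarrow>
    (\<forall>h. (\<forall>x\<in>X. h x \<in> J) \<longrightarrow> (\<exists>B :: nat \<Rightarrow> nat set. (\<forall>n. B n \<in> K) \<and> (\<forall>x\<in>X. \<exists>n. h x \<subseteq> B n)))"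
proof -
  have "{} \<in> J" using assms by (simp add: ideal_finite)
  then have "card_below X (addw_family J K) \<longleftrightarrow>
      (\<forall>h. h ` X \<subseteq> J \<longrightarrow> \<not> addw_family J K (h ` X))"
    by (rule card_below_iff_no_indexed_family) (unfold addw_family_def, blast+)
  then show ?thesis
    by (simp add: addw_family_def image_subset_iff)
qed

lemma pointwise_imp_quasi_normal_iff:
  assumes I: "is_ideal I" and J: "is_ideal J"
  shows "(\<forall>f :: nat \<Rightarrow> 'a \<Rightarrow> real. I_pointwise I X f \<longrightarrow> I_quasi_normal J X f) \<longleftrightarrow>
    card_below X (bs_family J J I)"
  unfolding card_below_bs_family_iff[OF I]
proof (intro iffI allI impI)
  fix h :: "'a \<Rightarrow> nat \<Rightarrow> nat set"
  assume all_f: "\<forall>f :: nat \<Rightarrow> 'a \<Rightarrow> real. I_pointwise I X f \<longrightarrow> I_quasi_normal J X f"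
    and h: "\<forall>x\<in>X. h x \<in> hatP I"
  then have "I_pointwise I X (\<lambda>n x. first_hit_seq (h x) n)"
    by (intro I_pointwise_first_hit_seq[OF I]) (auto simp: hatP_def)
  with all_f have "I_quasi_normal J X (\<lambda>n x. first_hit_seq (h x) n)" by blast
  then show "\<exists>A\<in>PP J. \<forall>x\<in>X. (\<Union>n. A (Suc n) \<inter> (\<Union>i\<le>n. h x i)) \<in> J"
    by (simp add: I_quasi_normal_iff_partition[OF J] superlevel_set_first_hit_seq)
next
  fix f :: "nat \<Rightarrow> 'a \<Rightarrow> real"
  assume all_h: "\<forall>h. (\<forall>x\<in>X. h x \<in> hatP I) \<longrightarrow>
      (\<exists>A\<in>PP J. \<forall>x\<in>X. (\<Union>n. A (Suc n) \<inter> (\<Union>i\<le>n. h x i)) \<in> J)"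
    and "I_pointwise I X f"
  then have "\<forall>x\<in>X. disjointed (superlevel_set (\<lambda>n. f n x)) \<in> hatP I"
    by (simp add: I_pointwise_def I_conv_iff_superlevel_sets[OF I] disjointed_in_hatP[OF I])
  with all_h[rule_format, of "\<lambda>x. disjointed (superlevel_set (\<lambda>n. f n x))"]
  show "I_quasi_normal J X f"
    by (simp add: I_quasi_normal_iff_partition[OF J] UN_atMost_disjointed incseq_superlevel_set)
qed

lemma pointwise_imp_sigma_uniform_iff:
  assumes I: "is_ideal I" and K: "is_ideal K"
  shows "(\<forall>f :: nat \<Rightarrow> 'a \<Rightarrow> real. I_pointwise I X f \<longrightarrow> I_sigma_uniform K X f) \<longleftrightarrow>
    card_below X (bsigma_family I K)"
  unfolding card_below_bsigma_family_iff[OF I]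
proof (intro iffI allI impI)
  fix h :: "'a \<Rightarrow> nat \<Rightarrow> nat set"
  assume all_f: "\<forall>f :: nat \<Rightarrow> 'a \<Rightarrow> real. I_pointwise I X f \<longrightarrow> I_sigma_uniform K X f"
    and h: "\<forall>x\<in>X. h x \<in> MM I"
  then have "I_pointwise I X (\<lambda>n x. first_hit_seq (h x) n)"
    by (intro I_pointwise_first_hit_seq[OF I]) (auto simp: MM_def)
  with all_f have "I_sigma_uniform K X (\<lambda>n x. first_hit_seq (h x) n)" by blast
  moreover have "superlevel_set (first_hit_seq (h x)) k = h x k" if "x \<in> X" for x k
    using h that by (simp add: superlevel_set_first_hit_seq mono_imp_UN_eq_last MM_def mono_iff_le_Suc)
  ultimately show "\<exists>A\<in>MM K. \<forall>x\<in>X. finite {n. \<not> h x n \<subseteq> A n}"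
    by (simp add: I_sigma_uniform_iff_MM[OF K])
next
  fix f :: "nat \<Rightarrow> 'a \<Rightarrow> real"
  assume all_h: "\<forall>h. (\<forall>x\<in>X. h x \<in> MM I) \<longrightarrow> (\<exists>A\<in>MM K. \<forall>x\<in>X. finite {n. \<not> h x n \<subseteq> A n})"
    and "I_pointwise I X f"
  then have "\<forall>x\<in>X. superlevel_set (\<lambda>n. f n x) \<in> MM I"
    using incseq_superlevel_set
    by (simp add: I_pointwise_def I_conv_iff_superlevel_sets[OF I] MM_def incseq_Suc_iff)
  with all_h[rule_format, of "\<lambda>x. superlevel_set (\<lambda>n. f n x)"] show "I_sigma_uniform K X f"
    by (simp add: I_sigma_uniform_iff_MM[OF K])
qed

lemma quasi_normal_imp_sigma_uniform_iff:
  assumes J: "is_ideal J" and K: "is_ideal K"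
  shows "(\<forall>f :: nat \<Rightarrow> 'a \<Rightarrow> real. I_quasi_normal J X f \<longrightarrow> I_sigma_uniform K X f) \<longleftrightarrow>
    card_below X (addw_family J K)"
  unfolding card_below_addw_family_iff[OF J]
proof (intro iffI allI impI)
  fix h :: "'a \<Rightarrow> nat set"
  assume all_f: "\<forall>f :: nat \<Rightarrow> 'a \<Rightarrow> real. I_quasi_normal J X f \<longrightarrow> I_sigma_uniform K X f"
    and h: "\<forall>x\<in>X. h x \<in> J"
  have "I_quasi_normal J X (\<lambda>n x. indicator (h x) n)"
    unfolding I_quasi_normal_iff_partition[OF J] superlevel_set_indicator
  proof (rule bexI[OF _ singletons_in_PP[OF J]], rule ballI)
    fix x assume "x \<in> X"
    have "(\<Union>n. {Suc n} \<inter> h x) \<subseteq> h x" by blast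
    with h \<open>x \<in> X\<close> show "(\<Union>n. {Suc n} \<inter> h x) \<in> J"
      using ideal_mono[OF J] by blast
  qed
  with all_f have "I_sigma_uniform K X (\<lambda>n x. indicator (h x) n)" by blast
  then obtain A where A: "A \<in> MM K" and fin: "\<And>x. x \<in> X \<Longrightarrow> finite {k. \<not> h x \<subseteq> A k}"
    by (auto simp: I_sigma_uniform_iff_MM[OF K] superlevel_set_indicator)
  have "\<exists>k. h x \<subseteq> A k" if "x \<in> X" for x
    using ex_new_if_finite[OF infinite_UNIV_nat fin[OF that]] by blast
  with A show "\<exists>B :: nat \<Rightarrow> nat set. (\<forall>n. B n \<in> K) \<and> (\<forall>x\<in>X. \<exists>n. h x \<subseteq> B n)"
    by (auto simp: MM_def)
next
  fix f :: "nat \<Rightarrow> 'a \<Rightarrow> real"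
  assume all_h: "\<forall>h. (\<forall>x\<in>X. h x \<in> J) \<longrightarrow>
      (\<exists>B :: nat \<Rightarrow> nat set. (\<forall>n. B n \<in> K) \<and> (\<forall>x\<in>X. \<exists>n. h x \<subseteq> B n))"
    and quasi_normal: "I_quasi_normal J X f"
  from quasi_normal obtain eps where conv: "I_conv J eps"
    and small: "\<And>x. x \<in> X \<Longrightarrow> {m. eps m \<le> \<bar>f m x\<bar>} \<in> J"
    unfolding I_quasi_normal_def by blast
  show "I_sigma_uniform K X f"
  proof (cases "X = {}")
    case True
    show ?thesis unfolding I_sigma_uniform_def
      by (intro exI[of _ "\<lambda>_. {}"]) (simp add: True I_uniform_def ideal_finite[OF K])
  next
    case False
    \<comment> \<open>The hypothesis for constant families yields \<open>J \<subseteq> K\<close>, as \<open>X \<noteq> {}\<close>.\<close>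
    have "C \<in> K" if "C \<in> J" for C
    proof -
      from all_h[rule_format, of "\<lambda>_. C"] that obtain B :: "nat \<Rightarrow> nat set"
        where "\<forall>n. B n \<in> K" and "\<forall>x\<in>X. \<exists>n. C \<subseteq> B n"
        by auto
      with False show "C \<in> K" using ideal_mono[OF K] by blast
    qed
    then have "I_conv K eps" using conv by (auto simp: I_conv_def)
    moreover have "\<exists>B :: nat \<Rightarrow> nat set. (\<forall>n. B n \<in> K) \<and>
        (\<forall>x\<in>X. \<exists>n. {m. eps m \<le> \<bar>f m x\<bar>} \<subseteq> B n)"
      by (rule all_h[rule_format]) (rule small)
    then obtain B :: "nat \<Rightarrow> nat set" where "\<And>n. B n \<in> K"
      and "\<And>x. x \<in> X \<Longrightarrow> \<exists>n. {m. eps m \<le> \<bar>f m x\<bar>} \<subseteq> B n"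
      by blast
    ultimately show ?thesis by (rule I_sigma_uniform_if_dominated[OF K])
  qed
qed

theorem theorem4p6:
  fixes I J K :: "nat set set" and X :: "'a set"
  assumes "is_ideal I" and "is_ideal J" and "is_ideal K"
  shows "((\<forall>f :: nat \<Rightarrow> 'a \<Rightarrow> real.
             (\<forall>n. continuous_map (discrete_topology X) euclideanreal (f n)) \<longrightarrow>
             I_pointwise I X f \<longrightarrow> I_quasi_normal J X f)
          \<longleftrightarrow> card_below X (bs_family J J I))
       \<and> ((\<forall>f :: nat \<Rightarrow> 'a \<Rightarrow> real.
             (\<forall>n. continuous_map (discrete_topology X) euclideanreal (f n)) \<longrightarrow>
             I_pointwise I X f \<longrightarrow> I_sigma_uniform K X f)
          \<longleftrightarrow> card_below X (bsigma_family I K))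
       \<and> ((\<forall>f :: nat \<Rightarrow> 'a \<Rightarrow> real.
             (\<forall>n. continuous_map (discrete_topology X) euclideanreal (f n)) \<longrightarrow>
             I_quasi_normal J X f \<longrightarrow> I_sigma_uniform K X f)
          \<longleftrightarrow> card_below X (addw_family J K))"
proof -
  have continuous: "continuous_map (discrete_topology X) euclideanreal g" for g :: "'a \<Rightarrow> real"
    by simp
  show ?thesis
    by (simp only: continuous simp_thms)
      (intro conjI pointwise_imp_quasi_normal_iff[OF assms(1,2)]
        pointwise_imp_sigma_uniform_iff[OF assms(1,3)]
        quasi_normal_imp_sigma_uniform_iff[OF assms(2,3)])
qed

end
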